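(* Assume Case (III) holds with $\mathrm{rank}(\mathbf H)=m$, and let $\mathbf y^\star$ be the unique least squares solution of $\mathbf z=\mathbf H\mathbf y$. Suppose $\mathrm G_{\sigma(t)}\equiv\mathrm G^S$ is the fixed complete digraph on $\mathrm V$ (all ordered pairs of distinct nodes are arcs) and $a_{ij}(t)\equiv a^S>0$ for all $i,j$. Then for every initial value $\mathbf x(0)\in\mathcal A_1\times\cdots\times\mathcal A_N$, along the "projection consensus" flow, $\lim_{t\to\infty}\frac1N\sum_{i=1}^N\mathbf x_i(t)=\mathbf y^\star$.
   Context: Setting: $N,m\ge1$; $\mathbf H\in\mathbb R^{N\times m}$ has rows $\mathbf h_1^T,\dots,\mathbf h_N^T$ with $\|\mathbf h_i\|=1$; $\mathbf z=(z_1,\dots,z_N)^T$. $\mathcal A_i=\{\mathbf y\in\mathbb R^m:\mathbf h_i^T\mathbf y=z_i\}$, $\mathcal P_{\mathcal A_i}(\mathbf y)=(I-\mathbf h_i\mathbf h_i^T)\mathbf y+z_i\mathbf h_i$ its Euclidean projection. Case (III): $\mathbf z$ is not in the column space of $\mathbf H$; least squares solution $\mathbf y^\star=(\mathbf H^T\mathbf H)^{-1}\mathbf H^T\mathbf z$. $\mathrm V=\{1,\dots,N\}$, $\mathrm N_i=\mathrm V\setminus\{i\}$ for the complete graph. The "projection consensus" flow is $\dot{\mathbf x}_i=\sum_{j\in\mathrm N_i}a_{ij}\big(\mathcal P_{\mathcal A_i}(\mathbf x_j)-\mathcal P_{\mathcal A_i}(\mathbf x_i)\big)$, $i\in\mathrm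 V$, $\mathbf x_i(t)\in\mathbb R^m$. *)

theory Defs
  imports "HOL-Analysis.Analysis"
begin

text \<open>Euclidean projection onto the affine hyperplane
  A_i = {y. h_i . y = z_i}: P_{A_i}(y) = (I - h_i h_i^T) y + z_i h_i.\<close>
definition projA :: "('n \<Rightarrow> real^'m) \<Rightarrow> ('n \<Rightarrow> real) \<Rightarrow> 'n \<Rightarrow> real^'m \<Rightarrow> real^'m" where
  "projA h z i y = (mat 1 - (\<chi> r c. (h i $ r) * (h i $ c))) *v y + z i *\<^sub>R h i"

definition rowmat :: "('n \<Rightarrow> real^'m) \<Rightarrow> real^'m^'n" where
  "rowmat h = (\<chi> i. h i)"

end

theory Submission imports Defs "HOL-Real_Asymp.Real_Asymp" begin

text \<open>Since h_i \<bullet> P_i(y) = z_i, every agent stays on its own hyperplane A_i, where P_i is the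
  identity. Summing the flow over all agents then collapses the pairwise differences, and the sum
  S = x_1 + ... + x_N obeys the linear ODE S' = a (N H^T z - H^T H S). Full column rank makes the
  Gram matrix H^T H positive definite, so S converges exponentially to N (H^T H)^-1 H^T z,
  i.e. the average converges to the least squares solution. That z is not in the range of H
  (Case III) plays no role in the argument.\<close>

lemma projA_eq: "projA h z i y = y - (h i \<bullet> y) *\<^sub>R h i + z i *\<^sub>R h i"
proof -
  have "((mat 1 - (\<chi> r c. h i $ r * h i $ c)) *v y) $ r = y $ r - h i $ r * (h i \<bullet> y)" for r
  proof -
    have "((mat 1 - (\<chi> r c. h i $ r * h i $ c)) *v y) $ r
       = (\<Sum>c\<in>UNIV. (if r = c then 1 else 0) * y $ c - h i $ r * (h i $ c * y $ c))"
      by (simp add: matrix_vector_mult_def mat_def left_diff_distrib mult.assoc)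
    also have "\<dots> = y $ r - h i $ r * (h i \<bullet> y)"
      by (simp add: sum_subtractf inner_vec_def sum_distrib_left if_distrib[where f="\<lambda>a. a * _"]
          cong: if_cong)
    finally show ?thesis .
  qed
  then show ?thesis
    by (simp add: projA_def vec_eq_iff mult.commute)
qed

lemma inner_projA: "norm (h i) = 1 \<Longrightarrow> h i \<bullet> projA h z i y = z i"
  by (simp add: projA_eq inner_diff_right inner_add_right norm_eq_1)

lemma rowmat_mult_vec: "rowmat h *v y = (\<chi> i. h i \<bullet> y)"
  by (simp add: rowmat_def vec_eq_iff matrix_vector_mul_component)

lemma transpose_rowmat_mult_vec: "transpose (rowmat h) *v w = (\<Sum>i\<in>UNIV. w $ i *\<^sub>R h i)"
  by (simp add: rowmat_def vec_eq_iff vector_matrix_mult_def sum_component mult.commute)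

lemma gram_rowmat_mult_vec:
  "(transpose (rowmat h) ** rowmat h) *v y = (\<Sum>i\<in>UNIV. (h i \<bullet> y) *\<^sub>R h i)"
  unfolding matrix_vector_mul_assoc[symmetric] transpose_rowmat_mult_vec rowmat_mult_vec by simp

lemma inner_gram_mult_vec:
  fixes A :: "real^'m^'n"
  shows "y \<bullet> ((transpose A ** A) *v y) = (A *v y) \<bullet> (A *v y)"
  by (metis dot_lmul_matrix inner_commute matrix_vector_mul_assoc transpose_matrix_vector)

lemma gram_coercive:
  fixes A :: "real^'m^'n"
  assumes "rank A = CARD('m)"
  obtains c where "c > 0" "\<And>y. c * (y \<bullet> y) \<le> y \<bullet> ((transpose A ** A) *v y)"
proof -
  obtain B where "B > 0" and B: "\<And>y. B * norm y \<le> norm (A *v y)"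
    using linear_inj_bounded_below_pos[OF matrix_vector_mul_linear] assms full_rank_injective
    by blast
  have "B\<^sup>2 * (y \<bullet> y) \<le> y \<bullet> ((transpose A ** A) *v y)" for y
  proof -
    have "(B * norm y)\<^sup>2 \<le> (norm (A *v y))\<^sup>2"
      using B[of y] \<open>B > 0\<close> by (intro power_mono) auto
    then show ?thesis
      by (simp add: inner_gram_mult_vec power_mult_distrib dot_square_norm)
  qed
  with \<open>B > 0\<close> show thesis
    using that[of "B\<^sup>2"] by simp
qed

lemma coercive_matrix_invertible:
  fixes M :: "real^'m^'m"
  assumes "c > 0" and coercive: "\<And>y. c * (y \<bullet> y) \<le> y \<bullet> (M *v y)"
  shows "invertible M"
proof -
  have "inj ((*v) M)"
  proof (rule linear_injective_0[OF matrix_vector_mul_linear, THEN iffD2], intro allI impI)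
    fix y assume "M *v y = 0"
    then have "c * (y \<bullet> y) \<le> 0"
      using coercive[of y] by simp
    then have "y \<bullet> y \<le> 0"
      using \<open>c > 0\<close> by (simp add: mult_le_0_iff)
    then show "y = 0"
      using inner_ge_zero[of y] by simp
  qed
  then show ?thesis
    using matrix_left_invertible_injective invertible_left_inverse by blast
qed

lemma matrix_mul_matrix_inv: "invertible A \<Longrightarrow> A ** matrix_inv A = mat 1"
  unfolding invertible_def matrix_inv_def by (rule someI_ex[THEN conjunct1])

lemma has_vector_derivative_inner_self:
  fixes f :: "real \<Rightarrow> 'a::real_inner"
  assumes "(f has_vector_derivative f') (at t within S)"
  shows "((\<lambda>s. f s \<bullet> f s) has_real_derivative 2 * (f t \<bullet> f')) (at t within S)"
proof -
  have f: "(f has_derivative (\<lambda>u. u *\<^sub>R f')) (at t within S)"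
    using assms by (simp add: has_vector_derivative_def)
  have "((\<lambda>s. f s \<bullet> f s) has_derivative (\<lambda>u. f t \<bullet> (u *\<^sub>R f') + (u *\<^sub>R f') \<bullet> f t)) (at t within S)"
    by (rule has_derivative_inner[OF f f])
  moreover have "(\<lambda>u. f t \<bullet> (u *\<^sub>R f') + (u *\<^sub>R f') \<bullet> f t) = (*) (2 * (f t \<bullet> f'))"
    by (auto simp: inner_commute algebra_simps)
  ultimately show ?thesis
    by (simp add: has_field_derivative_def)
qed

lemma dissipative_flow_sq_norm_bound:
  fixes f :: "real \<Rightarrow> 'a::real_inner"
  assumes deriv: "\<And>t. t \<ge> 0 \<Longrightarrow> (f has_vector_derivative f' t) (at t within {0..})"
    and dissipative: "\<And>t. t \<ge> 0 \<Longrightarrow> f t \<bullet> f' t \<le> - c * (f t \<bullet> f t)"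
    and "t \<ge> 0"
  shows "f t \<bullet> f t \<le> (f 0 \<bullet> f 0) * exp (- 2 * c * t)"
proof -
  define W where "W s = (f s \<bullet> f s) * exp (2 * c * s)" for s
  define W' where "W' s = 2 * (f s \<bullet> f' s + c * (f s \<bullet> f s)) * exp (2 * c * s)" for s
  have "(W has_real_derivative W' s) (at s within {0..t})" if "0 \<le> s" for s
  proof -
    have "(W has_real_derivative W' s) (at s within {0..})"
      unfolding W_def W'_def
      by (rule derivative_eq_intros has_vector_derivative_inner_self deriv that refl)+
         (simp add: algebra_simps)
    then show ?thesis
      by (rule has_field_derivative_subset) auto
  qed
  then obtain s where "s \<in> {0..t}" and s: "W t - W 0 = W' s * (t - 0)"
    using mvt_very_simple[OF \<open>t \<ge> 0\<close>, of W "\<lambda>s. (*) (W' s)"]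
    by (auto simp: has_field_derivative_def)
  have "W' s \<le> 0"
    using dissipative[of s] \<open>s \<in> {0..t}\<close> by (auto simp: W'_def mult_nonpos_nonneg)
  then have "W t \<le> W 0"
    using s mult_nonpos_nonneg[of "W' s" t] \<open>t \<ge> 0\<close> by simp
  then show ?thesis
    by (simp add: W_def exp_minus field_simps)
qed

lemma dissipative_flow_tendsto_zero:
  fixes f :: "real \<Rightarrow> 'a::real_inner"
  assumes "c > 0"
    and deriv: "\<And>t. t \<ge> 0 \<Longrightarrow> (f has_vector_derivative f' t) (at t within {0..})"
    and dissipative: "\<And>t. t \<ge> 0 \<Longrightarrow> f t \<bullet> f' t \<le> - c * (f t \<bullet> f t)"
  shows "(f \<longlongrightarrow> 0) at_top"
proof -
  have decay: "((\<lambda>t. (f 0 \<bullet> f 0) * exp (- 2 * c * t)) \<longlongrightarrow> 0) at_top"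
    using \<open>c > 0\<close> by real_asymp
  have bound: "\<forall>\<^sub>F t in at_top. f t \<bullet> f t \<le> (f 0 \<bullet> f 0) * exp (- 2 * c * t)"
    using eventually_ge_at_top[of 0]
    by eventually_elim (rule dissipative_flow_sq_norm_bound[OF deriv dissipative])
  have "((\<lambda>t. f t \<bullet> f t) \<longlongrightarrow> 0) at_top"
    by (rule tendsto_sandwich[OF _ bound tendsto_const decay]) simp
  then have "((\<lambda>t. sqrt (f t \<bullet> f t)) \<longlongrightarrow> 0) at_top"
    using tendsto_real_sqrt by fastforce
  then show ?thesis
    by (simp add: norm_eq_sqrt_inner[symmetric] tendsto_norm_zero_iff)
qed

lemma inner_constant_if_derivative_orthogonal:
  fixes f :: "real \<Rightarrow> 'a::real_inner"
  assumes deriv: "\<And>t. t \<ge> 0 \<Longrightarrow> (f has_vector_derivative f' t) (at t within {0..})"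
    and orthogonal: "\<And>t. t \<ge> 0 \<Longrightarrow> v \<bullet> f' t = 0"
    and "t \<ge> 0"
  shows "v \<bullet> f t = v \<bullet> f 0"
proof -
  have "\<exists>d. \<forall>s\<in>{0..}. v \<bullet> f s = d"
  proof (rule has_derivative_zero_constant)
    fix s :: real
    assume "s \<in> {0..}"
    then have "((\<lambda>s. v \<bullet> f s) has_derivative (\<lambda>u. v \<bullet> (u *\<^sub>R f' s))) (at s within {0..})"
      using deriv unfolding has_vector_derivative_def by (intro has_derivative_inner_right) auto
    then show "((\<lambda>s. v \<bullet> f s) has_derivative (\<lambda>u. 0)) (at s within {0..})"
      using orthogonal \<open>s \<in> {0..}\<close> by simp
  qed simp
  then show ?thesis
    using \<open>t \<ge> 0\<close> by force
qed

lemma coercive_linear_flow_tendsto: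
  fixes M :: "real^'m^'m" and S :: "real \<Rightarrow> real^'m"
  assumes "a > 0" "c > 0"
    and coercive: "\<And>y. c * (y \<bullet> y) \<le> y \<bullet> (M *v y)"
    and deriv: "\<And>t. t \<ge> 0 \<Longrightarrow> (S has_vector_derivative a *\<^sub>R (b - M *v S t)) (at t within {0..})"
  shows "(S \<longlongrightarrow> matrix_inv M *v b) at_top"
proof -
  define y0 where "y0 = matrix_inv M *v b"
  have "M *v y0 = b"
    using matrix_mul_matrix_inv[OF coercive_matrix_invertible[OF \<open>c > 0\<close> coercive]]
    by (simp add: y0_def matrix_vector_mul_assoc)
  have error_deriv: "((\<lambda>t. S t - y0) has_vector_derivative - a *\<^sub>R (M *v (S t - y0))) (at t within {0..})"
    if "t \<ge> 0" for t
  proof -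
    have "((\<lambda>t. S t - y0) has_vector_derivative a *\<^sub>R (b - M *v S t) - 0) (at t within {0..})"
      by (intro derivative_intros deriv that)
    then show ?thesis
      using \<open>M *v y0 = b\<close> by (simp add: matrix_vector_mult_diff_distrib algebra_simps)
  qed
  have "(S t - y0) \<bullet> (- a *\<^sub>R (M *v (S t - y0))) \<le> - (a * c) * ((S t - y0) \<bullet> (S t - y0))" for t
    using mult_left_mono[OF coercive[of "S t - y0"], of a] \<open>a > 0\<close> by (simp add: algebra_simps)
  with error_deriv have "((\<lambda>t. S t - y0) \<longlongrightarrow> 0) at_top"
    by (intro dissipative_flow_tendsto_zero[of "a * c"]) (auto simp: \<open>a > 0\<close> \<open>c > 0\<close>)
  then show ?thesis
    unfolding y0_def by (rule LIM_zero_cancel)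
qed

lemma projection_consensus_stays_on_hyperplanes:
  fixes h :: "'n::finite \<Rightarrow> real^'m" and a :: "'n \<Rightarrow> 'n \<Rightarrow> real"
  assumes unit: "norm (h i) = 1"
    and flow: "\<And>t. t \<ge> 0 \<Longrightarrow> ((\<lambda>s. x s i) has_vector_derivative
          (\<Sum>j\<in>UNIV - {i}. a i j *\<^sub>R (projA h z i (x t j) - projA h z i (x t i)))) (at t within {0..})"
    and init: "h i \<bullet> x 0 i = z i"
    and "t \<ge> 0"
  shows "h i \<bullet> x t i = z i"
  using inner_constant_if_derivative_orthogonal[OF flow _ \<open>t \<ge> 0\<close>] init
  by (simp add: inner_sum_right inner_diff_right inner_projA unit)

lemma projection_consensus_sum:
  fixes h :: "'n::finite \<Rightarrow> real^'m" and x :: "'n \<Rightarrow> real^'m"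
  assumes on_hyperplanes: "\<And>i. h i \<bullet> x i = z $ i"
  shows "(\<Sum>i\<in>UNIV. \<Sum>j\<in>UNIV - {i}. a *\<^sub>R (projA h (\<lambda>k. z $ k) i (x j) - projA h (\<lambda>k. z $ k) i (x i)))
       = a *\<^sub>R (real CARD('n) *\<^sub>R (transpose (rowmat h) *v z)
                - (transpose (rowmat h) ** rowmat h) *v (\<Sum>i\<in>UNIV. x i))"
proof -
  define S where "S = (\<Sum>i\<in>UNIV. x i)"
  define N where "N = real CARD('n)"
  have "(\<Sum>j\<in>UNIV - {i}. a *\<^sub>R (projA h (\<lambda>k. z $ k) i (x j) - projA h (\<lambda>k. z $ k) i (x i)))
      = a *\<^sub>R (S - N *\<^sub>R x i - (h i \<bullet> S) *\<^sub>R h i + N *\<^sub>R (z $ i *\<^sub>R h i))" for i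
  proof -
    have "(\<Sum>j\<in>UNIV - {i}. a *\<^sub>R (projA h (\<lambda>k. z $ k) i (x j) - projA h (\<lambda>k. z $ k) i (x i)))
        = (\<Sum>j\<in>UNIV. a *\<^sub>R (projA h (\<lambda>k. z $ k) i (x j) - projA h (\<lambda>k. z $ k) i (x i)))"
      by (simp add: sum_diff1)
    also have "\<dots> = (\<Sum>j\<in>UNIV. a *\<^sub>R (x j - x i - (h i \<bullet> x j) *\<^sub>R h i + z $ i *\<^sub>R h i))"
      by (intro sum.cong refl) (simp add: projA_eq on_hyperplanes algebra_simps)
    also have "\<dots> = a *\<^sub>R (S - N *\<^sub>R x i - (h i \<bullet> S) *\<^sub>R h i + N *\<^sub>R (z $ i *\<^sub>R h i))"
      by (simp add: S_def N_def scaleR_sum_right[symmetric] sum.distrib sum_subtractf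
          inner_sum_right scaleR_sum_left[symmetric] sum_constant_scaleR del: sum_constant)
    finally show ?thesis .
  qed
  then have "(\<Sum>i\<in>UNIV. \<Sum>j\<in>UNIV - {i}. a *\<^sub>R (projA h (\<lambda>k. z $ k) i (x j) - projA h (\<lambda>k. z $ k) i (x i)))
      = (\<Sum>i\<in>UNIV. a *\<^sub>R (S - N *\<^sub>R x i - (h i \<bullet> S) *\<^sub>R h i + N *\<^sub>R (z $ i *\<^sub>R h i)))"
    by simp
  also have "\<dots> = a *\<^sub>R (N *\<^sub>R S - N *\<^sub>R S - (transpose (rowmat h) ** rowmat h) *v S
                          + N *\<^sub>R (transpose (rowmat h) *v z))"
    unfolding gram_rowmat_mult_vec transpose_rowmat_mult_vec
    by (simp add: S_def N_def scaleR_sum_right[symmetric] sum.distrib sum_subtractf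
        sum_constant_scaleR del: sum_constant)
       (simp add: scaleR_sum_right)
  finally show ?thesis
    by (simp add: S_def N_def algebra_simps)
qed

theorem theorem8:
  fixes h :: "'n::finite \<Rightarrow> real^'m" and z :: "real^'n"
    and aS :: real and x :: "real \<Rightarrow> 'n \<Rightarrow> real^'m"
  assumes unit: "\<And>i. norm (h i) = 1"
    and caseIII: "z \<notin> range (\<lambda>y. rowmat h *v y)"
    and rank: "rank (rowmat h) = CARD('m)"
    and aS_pos: "aS > 0"
    and flow: "\<And>i t. t \<ge> 0 \<Longrightarrow>
        ((\<lambda>s. x s i) has_vector_derivative
          (\<Sum>j\<in>UNIV - {i}. aS *\<^sub>R (projA h (\<lambda>k. z $ k) i (x t j) - projA h (\<lambda>k. z $ k) i (x t i))))
        (at t within {0..})"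
    and init: "\<And>i. h i \<bullet> x 0 i = z $ i"
  shows "((\<lambda>t. (1 / real CARD('n)) *\<^sub>R (\<Sum>i\<in>UNIV. x t i)) \<longlongrightarrow>
           matrix_inv (transpose (rowmat h) ** rowmat h) *v (transpose (rowmat h) *v z)) at_top"
proof -
  let ?M = "transpose (rowmat h) ** rowmat h" and ?b = "transpose (rowmat h) *v z"
  define N where "N = real CARD('n)"
  define S where "S t = (\<Sum>i\<in>UNIV. x t i)" for t
  have on_hyperplanes: "h i \<bullet> x t i = z $ i" if "t \<ge> 0" for i t
    by (rule projection_consensus_stays_on_hyperplanes[OF unit flow init that])
  have "(S has_vector_derivative aS *\<^sub>R (N *\<^sub>R ?b - ?M *v S t)) (at t within {0..})" if "t \<ge> 0" for t
  proof -
    have "(S has_vector_derivative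
        (\<Sum>i\<in>UNIV. \<Sum>j\<in>UNIV - {i}. aS *\<^sub>R (projA h (\<lambda>k. z $ k) i (x t j) - projA h (\<lambda>k. z $ k) i (x t i))))
        (at t within {0..})"
      unfolding S_def by (intro has_vector_derivative_sum flow that)
    then show ?thesis
      by (simp add: projection_consensus_sum on_hyperplanes that S_def N_def)
  qed
  moreover obtain c where "c > 0" "\<And>y. c * (y \<bullet> y) \<le> y \<bullet> (?M *v y)"
    using gram_coercive[OF rank] by blast
  ultimately have "(S \<longlongrightarrow> matrix_inv ?M *v (N *\<^sub>R ?b)) at_top"
    using coercive_linear_flow_tendsto[OF aS_pos] by blast
  then have "((\<lambda>t. (1 / N) *\<^sub>R S t) \<longlongrightarrow> (1 / N) *\<^sub>R (matrix_inv ?M *v (N *\<^sub>R ?b))) at_top"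
    by (intro tendsto_scaleR tendsto_const)
  then show ?thesis
    by (simp add: S_def N_def matrix_vector_mult_scaleR)
qed

end
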